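(* For every type $A$: (CR1) $[\![A]\!]\subseteq \mathrm{SN}$; (CR2) if $t\in[\![A]\!]$ and $t\to_{\mathsf{dist}} s$, then $s\in[\![A]\!]$; (CR3) if $t$ is neutral and $\mathrm{Red}(t)\subseteq[\![A]\!]$, then $t\in[\![A]\!]$.
   Context: Terms: $t,s,u ::= x \mid \lambda x.t \mid ts \mid \langle t,s\rangle \mid \pi_1 t \mid \pi_2 t$ (up to $\alpha$-renaming). Top-level rules: $(\lambda x.t)s \mapsto t\{x:=s\}$; $\pi_i\langle t_1,t_2\rangle \mapsto t_i$ ($i=1,2$); $\langle t,s\rangle u \mapsto \langle tu, su\rangle$; $\pi_i(\lambda x.t)\mapsto \lambda x.\pi_i t$ ($i=1,2$); $\to_{\mathsf{dist}}$ is the closure of these rules under all term constructors. $\mathrm{SN}$ is the set of strongly normalizing terms for $\to_{\mathsf{dist}}$; $\mathrm{Red}(t)=\{s\mid t\to_{\mathsf{dist}} s\}$. A term is neutral if it is a variable, an application $ts$, or a projection $\pi_i t$. Types: $A ::= \tau \mid A\Rightarrow A \mid A\wedge A$. Interpretation: $[\![\tau]\!]=\mathrm{SN}$; $[\![A\Rightarrow B]\!]=\{t\mid \forall s\in[\![A]\!],\ ts\in[\![B]\!]\}$; $[\![A\wedge B]\!]=\{t\mid \pi_1t\in[\![A]\!]\text{ and }\pi_2 t\in[\![B]\!]\}$. *)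

theory Defs
  imports Main
begin

text \<open>Terms up to alpha-renaming, represented with de Bruijn indices.\<close>
datatype trm =
    Var nat
  | Lam trm
  | App trm trm
  | Pair trm trm
  | Pi1 trm
  | Pi2 trm

fun lift :: "trm \<Rightarrow> nat \<Rightarrow> trm" where
  "lift (Var i) k = (if i < k then Var i else Var (Suc i))"
| "lift (Lam t) k = Lam (lift t (Suc k))"
| "lift (App t s) k = App (lift t k) (lift s k)"
| "lift (Pair t s) k = Pair (lift t k) (lift s k)"
| "lift (Pi1 t) k = Pi1 (lift t k)"
| "lift (Pi2 t) k = Pi2 (lift t k)"

fun subst :: "trm \<Rightarrow> nat \<Rightarrow> trm \<Rightarrow> trm" where
  "subst (Var i) k s = (if k < i then Var (i - 1) else if i = k then s else Var i)"
| "subst (Lam t) k s = Lam (subst t (Suc k) (lift s 0))"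
| "subst (App t u) k s = App (subst t k s) (subst u k s)"
| "subst (Pair t u) k s = Pair (subst t k s) (subst u k s)"
| "subst (Pi1 t) k s = Pi1 (subst t k s)"
| "subst (Pi2 t) k s = Pi2 (subst t k s)"

inductive dist :: "trm \<Rightarrow> trm \<Rightarrow> bool" (infix "\<rightarrow>\<^sub>d" 50) where
  beta:     "App (Lam t) s \<rightarrow>\<^sub>d subst t 0 s"
| proj1:    "Pi1 (Pair t1 t2) \<rightarrow>\<^sub>d t1"
| proj2:    "Pi2 (Pair t1 t2) \<rightarrow>\<^sub>d t2"
| pairapp:  "App (Pair t s) u \<rightarrow>\<^sub>d Pair (App t u) (App s u)"
| pi1lam:   "Pi1 (Lam t) \<rightarrow>\<^sub>d Lam (Pi1 t)"
| pi2lam:   "Pi2 (Lam t) \<rightarrow>\<^sub>d Lam (Pi2 t)"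
| lam:      "t \<rightarrow>\<^sub>d t' \<Longrightarrow> Lam t \<rightarrow>\<^sub>d Lam t'"
| appL:     "t \<rightarrow>\<^sub>d t' \<Longrightarrow> App t s \<rightarrow>\<^sub>d App t' s"
| appR:     "s \<rightarrow>\<^sub>d s' \<Longrightarrow> App t s \<rightarrow>\<^sub>d App t s'"
| pairL:    "t \<rightarrow>\<^sub>d t' \<Longrightarrow> Pair t s \<rightarrow>\<^sub>d Pair t' s"
| pairR:    "s \<rightarrow>\<^sub>d s' \<Longrightarrow> Pair t s \<rightarrow>\<^sub>d Pair t s'"
| pi1:      "t \<rightarrow>\<^sub>d t' \<Longrightarrow> Pi1 t \<rightarrow>\<^sub>d Pi1 t'"
| pi2:      "t \<rightarrow>\<^sub>d t' \<Longrightarrow> Pi2 t \<rightarrow>\<^sub>d Pi2 t'"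

text \<open>Strongly normalizing terms: no infinite reduction sequence starting from t
  (the accessible part of the converse reduction relation).\<close>
definition SN :: "trm set" where
  "SN = {t. Wellfounded.accp (\<lambda>s t. t \<rightarrow>\<^sub>d s) t}"

definition Red :: "trm \<Rightarrow> trm set" where
  "Red t = {s. t \<rightarrow>\<^sub>d s}"

definition neutral :: "trm \<Rightarrow> bool" where
  "neutral t \<longleftrightarrow> (\<exists>i. t = Var i) \<or> (\<exists>u v. t = App u v) \<or> (\<exists>u. t = Pi1 u) \<or> (\<exists>u. t = Pi2 u)"

datatype ty = Base | Arr ty ty | Conj ty ty

fun interp :: "ty \<Rightarrow> trm set" where
  "interp Base = SN"
| "interp (Arr A B) = {t. \<forall>s\<in>interp A. App t s \<in> interp B}"
| "interp (Conj A B) = {t. Pi1 t \<in> interp A \<and> Pi2 t \<in> interp B}"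

end

theory Submission
  imports Defs
begin

text \<open>Girard's reducibility candidates: call a set of terms a candidate if it satisfies
  (CR1)--(CR3). \<open>SN\<close> is a candidate, and candidates are closed under the arrow and conjunction
  constructions of \<open>interp\<close>, so every \<open>interp A\<close> is one by induction on \<open>A\<close>. The point of
  neutrality is that a neutral term in head position of an application or projection creates no
  redex, so every reduct of \<open>App t s\<close> or \<open>Pi\<^sub>i t\<close> reduces \<open>t\<close> or \<open>s\<close>. For CR3 at an arrow type
  this allows an induction on the strong normalisation of the argument \<open>s\<close>; for CR1 at an arrow
  type one applies \<open>t\<close> to a variable, which as a neutral normal form lies in every candidate.\<close>

definition CR :: "trm set \<Rightarrow> bool" where
  "CR X \<longleftrightarrow> X \<subseteq> SN \<and>
     (\<forall>t s. t \<in> X \<longrightarrow> t \<rightarrow>\<^sub>d s \<longrightarrow> s \<in> X) \<and>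
     (\<forall>t. neutral t \<longrightarrow> Red t \<subseteq> X \<longrightarrow> t \<in> X)"

lemma CR_subset_SN: "CR X \<Longrightarrow> X \<subseteq> SN"
  and CR_reduct: "CR X \<Longrightarrow> t \<in> X \<Longrightarrow> t \<rightarrow>\<^sub>d s \<Longrightarrow> s \<in> X"
  and CR_neutral: "CR X \<Longrightarrow> neutral t \<Longrightarrow> (\<And>s. t \<rightarrow>\<^sub>d s \<Longrightarrow> s \<in> X) \<Longrightarrow> t \<in> X"
  unfolding CR_def Red_def by blast+

lemma CRI:
  assumes "X \<subseteq> SN"
    and "\<And>t s. t \<in> X \<Longrightarrow> t \<rightarrow>\<^sub>d s \<Longrightarrow> s \<in> X"
    and "\<And>t. neutral t \<Longrightarrow> (\<And>s. t \<rightarrow>\<^sub>d s \<Longrightarrow> s \<in> X) \<Longrightarrow> t \<in> X"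
  shows "CR X"
  using assms unfolding CR_def Red_def by blast

lemma SN_intro: "(\<And>s. t \<rightarrow>\<^sub>d s \<Longrightarrow> s \<in> SN) \<Longrightarrow> t \<in> SN"
  unfolding SN_def mem_Collect_eq by (rule accp.accI)

lemma SN_reduct: "t \<in> SN \<Longrightarrow> t \<rightarrow>\<^sub>d s \<Longrightarrow> s \<in> SN"
  unfolding SN_def by (auto intro: accp_downward)

lemma SN_induct [consumes 1, case_names step]:
  assumes "t \<in> SN"
    and "\<And>t. t \<in> SN \<Longrightarrow> (\<And>s. t \<rightarrow>\<^sub>d s \<Longrightarrow> P s) \<Longrightarrow> P t"
  shows "P t"
proof -
  have "Wellfounded.accp (\<lambda>s t. t \<rightarrow>\<^sub>d s) t"
    using assms(1) unfolding SN_def by simp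
  then show ?thesis
  proof (induction rule: accp.induct)
    case (accI t)
    have "t \<in> SN"
      unfolding SN_def using accI.hyps by (simp add: accp.accI)
    then show ?case using accI.IH by (rule assms(2))
  qed
qed

lemma SN_of_SN_context:
  assumes compat: "\<And>t t'. t \<rightarrow>\<^sub>d t' \<Longrightarrow> C t \<rightarrow>\<^sub>d C t'"
    and "C t \<in> SN"
  shows "t \<in> SN"
proof -
  have "\<forall>t. u = C t \<longrightarrow> t \<in> SN" if "u \<in> SN" for u
    using that
  proof (induction rule: SN_induct)
    case (step u)
    show ?case
    proof (intro allI impI)
      fix t assume "u = C t"
      then show "t \<in> SN"
        using compat step.IH by (blast intro: SN_intro)
    qed
  qed
  then show ?thesis using assms(2) by blast
qed

lemma CR_SN: "CR SN"
  by (rule CRI) (auto intro: SN_reduct SN_intro)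

lemma neutral_App_reductE:
  assumes "neutral t" and "App t s \<rightarrow>\<^sub>d u"
  obtains t' where "t \<rightarrow>\<^sub>d t'" and "u = App t' s"
    | s' where "s \<rightarrow>\<^sub>d s'" and "u = App t s'"
  using assms(2,1) by cases (auto simp: neutral_def)

lemma neutral_Pi1_reductE:
  assumes "neutral t" and "Pi1 t \<rightarrow>\<^sub>d u"
  obtains t' where "t \<rightarrow>\<^sub>d t'" and "u = Pi1 t'"
  using assms(2,1) by cases (auto simp: neutral_def)

lemma neutral_Pi2_reductE:
  assumes "neutral t" and "Pi2 t \<rightarrow>\<^sub>d u"
  obtains t' where "t \<rightarrow>\<^sub>d t'" and "u = Pi2 t'"
  using assms(2,1) by cases (auto simp: neutral_def)

lemma CR_Var: "CR X \<Longrightarrow> Var i \<in> X"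
  by (erule CR_neutral) (auto simp: neutral_def elim: dist.cases)

lemma CR_arrow:
  assumes X: "CR X" and Y: "CR Y"
  shows "CR {t. \<forall>s\<in>X. App t s \<in> Y}"
proof (rule CRI)
  show "{t. \<forall>s\<in>X. App t s \<in> Y} \<subseteq> SN"
  proof
    fix t assume "t \<in> {t. \<forall>s\<in>X. App t s \<in> Y}"
    then have "App t (Var 0) \<in> SN"
      using CR_Var[OF X] CR_subset_SN[OF Y] by blast
    then show "t \<in> SN"
      by (rule SN_of_SN_context[rotated]) (rule dist.appL)
  qed
next
  show "s \<in> {t. \<forall>s\<in>X. App t s \<in> Y}"
    if "t \<in> {t. \<forall>s\<in>X. App t s \<in> Y}" and "t \<rightarrow>\<^sub>d s" for t s
    using that CR_reduct[OF Y] dist.appL by blast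
next
  fix t
  assume neutral: "neutral t" and reducts: "\<And>t'. t \<rightarrow>\<^sub>d t' \<Longrightarrow> t' \<in> {t. \<forall>s\<in>X. App t s \<in> Y}"
  have "s \<in> X \<longrightarrow> App t s \<in> Y" if "s \<in> SN" for s
    using that
  proof (induction rule: SN_induct)
    case (step s)
    show ?case
    proof
      assume s: "s \<in> X"
      show "App t s \<in> Y"
      proof (rule CR_neutral[OF Y], simp add: neutral_def)
        fix u assume "App t s \<rightarrow>\<^sub>d u"
        with neutral show "u \<in> Y"
        proof (cases rule: neutral_App_reductE)
          case (1 t')
          then show ?thesis using reducts s by blast
        next
          case (2 s')
          then show ?thesis using step.IH CR_reduct[OF X] s by blast
        qed
      qed
    qed
  qed
  then show "t \<in> {t. \<forall>s\<in>X. App t s \<in> Y}"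
    using CR_subset_SN[OF X] by blast
qed

lemma CR_conj:
  assumes X: "CR X" and Y: "CR Y"
  shows "CR {t. Pi1 t \<in> X \<and> Pi2 t \<in> Y}"
proof (rule CRI)
  show "{t. Pi1 t \<in> X \<and> Pi2 t \<in> Y} \<subseteq> SN"
    using CR_subset_SN[OF X] SN_of_SN_context[of Pi1] dist.pi1 by blast
next
  show "s \<in> {t. Pi1 t \<in> X \<and> Pi2 t \<in> Y}"
    if "t \<in> {t. Pi1 t \<in> X \<and> Pi2 t \<in> Y}" and "t \<rightarrow>\<^sub>d s" for t s
    using that CR_reduct[OF X] CR_reduct[OF Y] dist.pi1 dist.pi2 by blast
next
  fix t
  assume neutral: "neutral t" and reducts: "\<And>t'. t \<rightarrow>\<^sub>d t' \<Longrightarrow> t' \<in> {t. Pi1 t \<in> X \<and> Pi2 t \<in> Y}"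
  have "Pi1 t \<in> X"
    by (rule CR_neutral[OF X]) (auto simp: neutral_def elim: neutral_Pi1_reductE[OF neutral] dest: reducts)
  moreover have "Pi2 t \<in> Y"
    by (rule CR_neutral[OF Y]) (auto simp: neutral_def elim: neutral_Pi2_reductE[OF neutral] dest: reducts)
  ultimately show "t \<in> {t. Pi1 t \<in> X \<and> Pi2 t \<in> Y}" by simp
qed

lemma CR_interp: "CR (interp A)"
  by (induction A) (simp_all add: CR_SN CR_arrow CR_conj)

theorem lemma5:
  fixes A :: ty
  shows "interp A \<subseteq> SN \<and>
         (\<forall>t s. t \<in> interp A \<longrightarrow> t \<rightarrow>\<^sub>d s \<longrightarrow> s \<in> interp A) \<and>
         (\<forall>t. neutral t \<longrightarrow> Red t \<subseteq> interp A \<longrightarrow> t \<in> interp A)"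
  using CR_interp unfolding CR_def .

end
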